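(* Let $\mathrm{X}$ be a reflexive Banach space, let $\ell$ be a Schauder sequence space such that $\ell^*$ is also a Schauder sequence space, and let $F=\{f_i\}\subset\mathrm{X}$, $G=\{g_i\}\subset\mathrm{X}^*$. Then $(G,F)$ is an $(\ell,\ell^* )$-pair Bessel for $\mathrm{X}$ if and only if $(F,G)$ is an $(\ell^*,\ell)$-pair Bessel for $\mathrm{X}^*$, and in this case $S_{FG}^*=S_{GF}$. Likewise, $(G,F)$ is an $(\ell,\ell^* )$-pair frame for $\mathrm{X}$ if and only if $(F,G)$ is an $(\ell^*,\ell)$-pair frame for $\mathrm{X}^*$.
   Context: $\mathrm{X}^{**}$ is identified with $\mathrm{X}$ and $\langle f,g\rangle:=g(f)$. A BK-space is a Banach space of scalar sequences indexed by $\mathbb{N}$ with continuous coordinate functionals; a Schauder sequence space is a BK-space in which the canonical vectors $\delta_i$ form a Schauder basis; then $\ell^*$ is identified isometrically with the sequence space $\{\{\phi(\delta_i)\}:\phi\in\ell^*\}$, acting by $\phi(\{c_i\})=\sum_i\phi(\delta_i)c_i$, and $\ell$ is regarded as a subspace of $\ell^{**}$ in the same way. $G\subset\mathrm{X}^*$ is an $\ell$-Bessel for $\mathrm{X}$ if there is $B>0$ with $\{\langle f,g_i\rangle\}\in\ell$ and $\|\{\langle f,g_i\rangle\}\|_\ell\le B\|f\|$ for all $f\in\mathrm{X}$; $F\subset\mathrm{X}$ is an $\ell^*$-Bessel for $\mathrm{X}^*$ if there is $B>0$ with $\{\langle f_i,g\rangle\}\in\ell^*$ and $\|\{\langle f_i,g\rangle\}\|_{\ell^*}\le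 B\|g\|$ for all $g\in\mathrm{X}^*$. $(G,F)$ is an $(\ell,\ell^* )$-pair Bessel for $\mathrm{X}$ if $G$ is an $\ell$-Bessel for $\mathrm{X}$, $F$ is an $\ell^*$-Bessel for $\mathrm{X}^*$, and $S_{FG}(f)=\sum_i\langle f,g_i\rangle f_i$ converges for every $f\in\mathrm{X}$; it is an $(\ell,\ell^* )$-pair frame if moreover $S_{FG}$ is invertible. $(F,G)$ is an $(\ell^*,\ell)$-pair Bessel for $\mathrm{X}^*$ if $F$ is an $\ell^*$-Bessel for $\mathrm{X}^*$, $G$ is an $\ell$-Bessel for $\mathrm{X}=\mathrm{X}^{**}$, and $S_{GF}(g)=\sum_i\langle f_i,g\rangle g_i$ converges for every $g\in\mathrm{X}^*$; it is an $(\ell^*,\ell)$-pair frame if moreover $S_{GF}$ is invertible. *)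

theory Defs
  imports "HOL-Analysis.Analysis"
begin

text \<open>Scalars are real. Sequences are functions nat => real; a sequence space is a set L of
sequences with a norm function N defined on L.\<close>

definition BK_space :: "(nat \<Rightarrow> real) set \<Rightarrow> ((nat \<Rightarrow> real) \<Rightarrow> real) \<Rightarrow> bool" where
  "BK_space L N \<longleftrightarrow>
     (\<lambda>i. 0) \<in> L \<and>
     (\<forall>x\<in>L. \<forall>y\<in>L. (\<lambda>i. x i + y i) \<in> L) \<and>
     (\<forall>a. \<forall>x\<in>L. (\<lambda>i. a * x i) \<in> L) \<and>
     (\<forall>x\<in>L. 0 \<le> N x) \<and>
     (\<forall>x\<in>L. N x = 0 \<longleftrightarrow> x = (\<lambda>i. 0)) \<and>
     (\<forall>x\<in>L. \<forall>y\<in>L. N (\<lambda>i. x i + y i) \<le> N x + N y) \<and>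
     (\<forall>a. \<forall>x\<in>L. N (\<lambda>i. a * x i) = \<bar>a\<bar> * N x) \<and>
     (\<forall>s. (\<forall>n. s n \<in> L) \<and>
          (\<forall>e>0. \<exists>M. \<forall>m\<ge>M. \<forall>n\<ge>M. N (\<lambda>i. s m i - s n i) < e)
          \<longrightarrow> (\<exists>x\<in>L. (\<lambda>n. N (\<lambda>i. s n i - x i)) \<longlonglongrightarrow> 0)) \<and>
     (\<forall>i. \<exists>K. \<forall>x\<in>L. \<bar>x i\<bar> \<le> K * N x)"

definition delta :: "nat \<Rightarrow> nat \<Rightarrow> real" where
  "delta j = (\<lambda>i. if i = j then 1 else 0)"

text \<open>BK-space in which the canonical vectors form a Schauder basis (the coefficients
are necessarily the coordinates, by continuity of the coordinate functionals).\<close>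
definition Schauder_space :: "(nat \<Rightarrow> real) set \<Rightarrow> ((nat \<Rightarrow> real) \<Rightarrow> real) \<Rightarrow> bool" where
  "Schauder_space L N \<longleftrightarrow> BK_space L N \<and> (\<forall>j. delta j \<in> L) \<and>
     (\<forall>x\<in>L. (\<lambda>n. N (\<lambda>i. x i - (\<Sum>j<n. x j * delta j i))) \<longlonglongrightarrow> 0)"

text \<open>The dual l* identified with the sequences {phi(delta_i)}, acting by
  phi(c) = sum_i phi(delta_i) c_i, with the dual (operator) norm.\<close>
definition dual_set :: "(nat \<Rightarrow> real) set \<Rightarrow> ((nat \<Rightarrow> real) \<Rightarrow> real) \<Rightarrow> (nat \<Rightarrow> real) set" where
  "dual_set L N = {d. (\<forall>x\<in>L. summable (\<lambda>i. d i * x i)) \<and>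
                      (\<exists>B. \<forall>x\<in>L. \<bar>\<Sum>i. d i * x i\<bar> \<le> B * N x)}"

definition dual_norm :: "(nat \<Rightarrow> real) set \<Rightarrow> ((nat \<Rightarrow> real) \<Rightarrow> real) \<Rightarrow> (nat \<Rightarrow> real) \<Rightarrow> real" where
  "dual_norm L N d = (SUP x\<in>{x\<in>L. N x \<le> 1}. \<bar>\<Sum>i. d i * x i\<bar>)"

definition reflexive_space :: "'x::real_normed_vector itself \<Rightarrow> bool" where
  "reflexive_space _ \<longleftrightarrow>
     (\<forall>\<Phi> :: ('x \<Rightarrow>\<^sub>L real) \<Rightarrow>\<^sub>L real. \<exists>x::'x. \<forall>g. blinfun_apply \<Phi> g = blinfun_apply g x)"

definition ell_Bessel :: "(nat \<Rightarrow> real) set \<Rightarrow> ((nat \<Rightarrow> real) \<Rightarrow> real)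
    \<Rightarrow> (nat \<Rightarrow> ('x::real_normed_vector \<Rightarrow>\<^sub>L real)) \<Rightarrow> bool" where
  "ell_Bessel L N g \<longleftrightarrow> (\<exists>B>0. \<forall>x::'x. (\<lambda>i. blinfun_apply (g i) x) \<in> L \<and> N (\<lambda>i. blinfun_apply (g i) x) \<le> B * norm x)"

definition dual_ell_Bessel :: "(nat \<Rightarrow> real) set \<Rightarrow> ((nat \<Rightarrow> real) \<Rightarrow> real)
    \<Rightarrow> (nat \<Rightarrow> 'x::real_normed_vector) \<Rightarrow> bool" where
  "dual_ell_Bessel L N f \<longleftrightarrow> (\<exists>B>0. \<forall>h :: 'x \<Rightarrow>\<^sub>L real.
      (\<lambda>i. blinfun_apply h (f i)) \<in> dual_set L N \<and> dual_norm L N (\<lambda>i. blinfun_apply h (f i)) \<le> B * norm h)"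

definition S_FG :: "(nat \<Rightarrow> 'x::real_normed_vector) \<Rightarrow> (nat \<Rightarrow> ('x \<Rightarrow>\<^sub>L real)) \<Rightarrow> 'x \<Rightarrow> 'x" where
  "S_FG f g = (\<lambda>x. \<Sum>i. blinfun_apply (g i) x *\<^sub>R f i)"

definition S_GF :: "(nat \<Rightarrow> 'x::real_normed_vector) \<Rightarrow> (nat \<Rightarrow> ('x \<Rightarrow>\<^sub>L real))
    \<Rightarrow> ('x \<Rightarrow>\<^sub>L real) \<Rightarrow> ('x \<Rightarrow>\<^sub>L real)" where
  "S_GF f g = (\<lambda>h. \<Sum>i. blinfun_apply h (f i) *\<^sub>R g i)"

definition pair_Bessel :: "(nat \<Rightarrow> real) set \<Rightarrow> ((nat \<Rightarrow> real) \<Rightarrow> real)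
    \<Rightarrow> (nat \<Rightarrow> ('x::real_normed_vector \<Rightarrow>\<^sub>L real)) \<Rightarrow> (nat \<Rightarrow> 'x) \<Rightarrow> bool" where
  "pair_Bessel L N g f \<longleftrightarrow> ell_Bessel L N g \<and> dual_ell_Bessel L N f \<and>
     (\<forall>x. summable (\<lambda>i. blinfun_apply (g i) x *\<^sub>R f i))"

text \<open>(F,G) is an (l*,l)-pair Bessel for X* (with X = X**, so the l-Bessel condition on G
  is the one for X)\<close>
definition dual_pair_Bessel :: "(nat \<Rightarrow> real) set \<Rightarrow> ((nat \<Rightarrow> real) \<Rightarrow> real)
    \<Rightarrow> (nat \<Rightarrow> 'x::real_normed_vector) \<Rightarrow> (nat \<Rightarrow> ('x \<Rightarrow>\<^sub>L real)) \<Rightarrow> bool" where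
  "dual_pair_Bessel L N f g \<longleftrightarrow> dual_ell_Bessel L N f \<and> ell_Bessel L N g \<and>
     (\<forall>h :: 'x \<Rightarrow>\<^sub>L real. summable (\<lambda>i. blinfun_apply h (f i) *\<^sub>R g i))"

definition invertible_op :: "('a::real_normed_vector \<Rightarrow> 'a) \<Rightarrow> bool" where
  "invertible_op S \<longleftrightarrow> bounded_linear S \<and>
     (\<exists>T. bounded_linear T \<and> (\<forall>x. T (S x) = x) \<and> (\<forall>y. S (T y) = y))"

definition pair_frame :: "(nat \<Rightarrow> real) set \<Rightarrow> ((nat \<Rightarrow> real) \<Rightarrow> real)
    \<Rightarrow> (nat \<Rightarrow> ('x::real_normed_vector \<Rightarrow>\<^sub>L real)) \<Rightarrow> (nat \<Rightarrow> 'x) \<Rightarrow> bool" where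
  "pair_frame L N g f \<longleftrightarrow> pair_Bessel L N g f \<and> invertible_op (S_FG f g)"

definition dual_pair_frame :: "(nat \<Rightarrow> real) set \<Rightarrow> ((nat \<Rightarrow> real) \<Rightarrow> real)
    \<Rightarrow> (nat \<Rightarrow> 'x::real_normed_vector) \<Rightarrow> (nat \<Rightarrow> ('x \<Rightarrow>\<^sub>L real)) \<Rightarrow> bool" where
  "dual_pair_frame L N f g \<longleftrightarrow> dual_pair_Bessel L N f g \<and> invertible_op (S_GF f g)"

end

theory Submission
  imports Defs
begin

(* The proof has three ingredients, developed in this order.
   1. Hahn-Banach: every vector x is normed by a functional of norm at most one.  This is
      proved from scratch by Zorn's lemma applied to norm-dominated linear graphs, and is
      used in the forms "norms and equality can be tested by functionals".
   2. Sequence-space facts: in a Schauder sequence space the blocks c_m,...,c_(n-1) of an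
      element become uniformly small, so a Banach-space series whose blocks are dominated
      by those blocks converges; and the dual pairing is bounded by the product of norms.
   3. Pair Bessel sequences: the Bessel bounds alone make both synthesis series
      sum_i g_i(x) f_i (using that l is Schauder) and sum_i h(f_i) g_i (using that l* is
      Schauder) converge, so the two pair Bessel notions coincide, and evaluating termwise
      shows that S_GF is the adjoint of S_FG.  Finally an operator S on a reflexive space is
      invertible iff its adjoint is, which yields the equivalence of the frame notions. *)

text \<open>A norm-dominated graph through x: a linear subspace of X \<times> R (the graph of a linear
  functional on a subspace of X) containing (x, norm x) on which the second coordinate is
  dominated by the norm of the first.  These are the objects of the Zorn argument.\<close>
definition norm_dominated_graph :: "'x::real_normed_vector \<Rightarrow> ('x \<times> real) set \<Rightarrow> bool" where
  "norm_dominated_graph x G \<longleftrightarrow> (x, norm x) \<in> G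
     \<and> (\<forall>v r w s. (v, r) \<in> G \<longrightarrow> (w, s) \<in> G \<longrightarrow> (v + w, r + s) \<in> G)
     \<and> (\<forall>a v r. (v, r) \<in> G \<longrightarrow> (a *\<^sub>R v, a * r) \<in> G)
     \<and> (\<forall>v r. (v, r) \<in> G \<longrightarrow> r \<le> norm v)"

lemma norm_dominated_graph_line: "norm_dominated_graph x {(t *\<^sub>R x, t * norm x) | t. True}"
  unfolding norm_dominated_graph_def
proof (intro conjI allI impI)
  show "(x, norm x) \<in> {(t *\<^sub>R x, t * norm x) | t. True}"
    by (rule CollectI, rule exI[of _ 1]) simp
next
  fix v r w s
  assume "(v, r) \<in> {(t *\<^sub>R x, t * norm x) | t. True}" "(w, s) \<in> {(t *\<^sub>R x, t * norm x) | t. True}"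
  then obtain t u where "v = t *\<^sub>R x" "r = t * norm x" "w = u *\<^sub>R x" "s = u * norm x" by auto
  then show "(v + w, r + s) \<in> {(t *\<^sub>R x, t * norm x) | t. True}"
    by (intro CollectI exI[of _ "t + u"]) (simp add: scaleR_left_distrib distrib_right)
next
  fix a v r assume "(v, r) \<in> {(t *\<^sub>R x, t * norm x) | t. True}"
  then obtain t where "v = t *\<^sub>R x" "r = t * norm x" by auto
  then show "(a *\<^sub>R v, a * r) \<in> {(t *\<^sub>R x, t * norm x) | t. True}"
    by (intro CollectI exI[of _ "a * t"]) simp
next
  fix v r assume "(v, r) \<in> {(t *\<^sub>R x, t * norm x) | t. True}"
  then obtain t where "v = t *\<^sub>R x" "r = t * norm x" by auto
  then show "r \<le> norm v" by (simp add: mult_right_mono)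
qed

lemma norm_dominated_graph_Union:
  assumes C: "C \<in> chains {G. norm_dominated_graph x G}" and ne: "C \<noteq> {}"
  shows "norm_dominated_graph x (\<Union>C)"
proof -
  have dom: "\<And>G. G \<in> C \<Longrightarrow> norm_dominated_graph x G"
    using C by (auto simp: chains_def)
  have comparable: "G \<subseteq> H \<or> H \<subseteq> G" if "G \<in> C" "H \<in> C" for G H
    using that C by (auto simp: chains_def chain_subset_def)
  obtain G0 where G0: "G0 \<in> C" using ne by auto
  show ?thesis unfolding norm_dominated_graph_def
  proof (intro conjI allI impI)
    show "(x, norm x) \<in> \<Union>C" using G0 dom[OF G0] by (auto simp: norm_dominated_graph_def)
  next
    fix v r w s assume "(v, r) \<in> \<Union>C" "(w, s) \<in> \<Union>C"
    then obtain G H where GH: "G \<in> C" "H \<in> C" "(v, r) \<in> G" "(w, s) \<in> H" by auto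
    then obtain K where K: "K \<in> C" "(v, r) \<in> K" "(w, s) \<in> K"
      using comparable[OF GH(1,2)] by blast
    then have "(v + w, r + s) \<in> K" using dom[OF K(1)] by (simp add: norm_dominated_graph_def)
    then show "(v + w, r + s) \<in> \<Union>C" using K(1) by blast
  next
    fix a v r assume "(v, r) \<in> \<Union>C"
    then obtain G where G: "G \<in> C" "(v, r) \<in> G" by auto
    then have "(a *\<^sub>R v, a * r) \<in> G" using dom[OF G(1)] by (simp add: norm_dominated_graph_def)
    then show "(a *\<^sub>R v, a * r) \<in> \<Union>C" using G(1) by blast
  next
    fix v r assume "(v, r) \<in> \<Union>C"
    then obtain G where "G \<in> C" "(v, r) \<in> G" by auto
    then show "r \<le> norm v" using dom by (auto simp: norm_dominated_graph_def)
  qed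
qed

text \<open>The one-dimensional extension step: to extend the functional to the direction y one
  needs a value c for y squeezed between the two families of bounds below.\<close>
lemma norm_dominated_graph_gap:
  assumes G: "norm_dominated_graph x G"
  obtains c where "\<And>u r. (u, r) \<in> G \<Longrightarrow> r - norm (u - y) \<le> c"
    and "\<And>w s. (w, s) \<in> G \<Longrightarrow> c \<le> norm (w + y) - s"
proof -
  have add: "\<And>v r w s. (v, r) \<in> G \<Longrightarrow> (w, s) \<in> G \<Longrightarrow> (v + w, r + s) \<in> G"
    and dom: "\<And>v r. (v, r) \<in> G \<Longrightarrow> r \<le> norm v" and x: "(x, norm x) \<in> G"
    using G by (auto simp: norm_dominated_graph_def)
  have key: "r - norm (u - y) \<le> norm (w + y) - s" if "(u, r) \<in> G" "(w, s) \<in> G" for u r w s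
  proof -
    have "r + s \<le> norm (u + w)" using add dom that by blast
    also have "\<dots> \<le> norm (u - y) + norm (w + y)"
      using norm_triangle_ineq[of "u - y" "w + y"] by simp
    finally show ?thesis by simp
  qed
  define S where "S = {r - norm (u - y) | u r. (u, r) \<in> G}"
  have "S \<noteq> {}" using x unfolding S_def by blast
  moreover have "bdd_above S" unfolding S_def bdd_above_def using key[OF _ x] by auto
  ultimately show ?thesis
    by (intro that[of "Sup S"] cSup_upper cSup_least) (auto simp: S_def intro: key)
qed

text \<open>Any such c keeps the extended functional dominated by the norm: rescale by 1/|t|.\<close>
lemma norm_dominated_graph_gap_bound:
  assumes G: "norm_dominated_graph x G"
    and below: "\<And>u r. (u, r) \<in> G \<Longrightarrow> r - norm (u - y) \<le> c"
    and above: "\<And>w s. (w, s) \<in> G \<Longrightarrow> c \<le> norm (w + y) - s"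
    and vr: "(v, r) \<in> G"
  shows "r + t * c \<le> norm (v + t *\<^sub>R y)"
proof (cases t "0::real" rule: linorder_cases)
  case less
  define s where "s = - t"
  have s: "s > 0" using less by (simp add: s_def)
  have "(inverse s *\<^sub>R v, inverse s * r) \<in> G"
    using G vr by (simp add: norm_dominated_graph_def)
  from below[OF this] have "inverse s * r - norm (inverse s *\<^sub>R v - y) \<le> c" .
  also have "inverse s *\<^sub>R v - y = inverse s *\<^sub>R (v + t *\<^sub>R y)"
    using s by (simp add: s_def scaleR_add_right)
  finally have "inverse s * (r - norm (v + t *\<^sub>R y)) \<le> c"
    using s by (simp add: right_diff_distrib)
  then show ?thesis using s by (simp add: s_def field_simps)
next
  case equal
  then show ?thesis using G vr by (simp add: norm_dominated_graph_def)
next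
  case greater
  have "(inverse t *\<^sub>R v, inverse t * r) \<in> G"
    using G vr by (simp add: norm_dominated_graph_def)
  from above[OF this] have "c \<le> norm (inverse t *\<^sub>R v + y) - inverse t * r" .
  also have "inverse t *\<^sub>R v + y = inverse t *\<^sub>R (v + t *\<^sub>R y)"
    using greater by (simp add: scaleR_add_right)
  finally have "c \<le> inverse t * (norm (v + t *\<^sub>R y) - r)"
    using greater by (simp add: right_diff_distrib)
  then show ?thesis using greater by (simp add: field_simps)
qed

lemma norm_dominated_graph_extend:
  assumes G: "norm_dominated_graph x G" and y: "\<forall>r. (y, r) \<notin> G"
  shows "\<exists>G'. norm_dominated_graph x G' \<and> G \<subset> G'"
proof -
  have add: "\<And>v r w s. (v, r) \<in> G \<Longrightarrow> (w, s) \<in> G \<Longrightarrow> (v + w, r + s) \<in> G"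
    and scale: "\<And>a v r. (v, r) \<in> G \<Longrightarrow> (a *\<^sub>R v, a * r) \<in> G"
    and x: "(x, norm x) \<in> G" using G by (auto simp: norm_dominated_graph_def)
  obtain c where below: "\<And>u r. (u, r) \<in> G \<Longrightarrow> r - norm (u - y) \<le> c"
    and above: "\<And>w s. (w, s) \<in> G \<Longrightarrow> c \<le> norm (w + y) - s"
    using norm_dominated_graph_gap[OF G] by blast
  define G' where "G' = {(v + t *\<^sub>R y, r + t * c) | v r t. (v, r) \<in> G}"
  have "norm_dominated_graph x G'" unfolding norm_dominated_graph_def
  proof (intro conjI allI impI)
    show "(x, norm x) \<in> G'" unfolding G'_def using x by force
  next
    fix v r w s assume "(v, r) \<in> G'" "(w, s) \<in> G'"
    then obtain v1 r1 t1 v2 r2 t2 where e: "(v1, r1) \<in> G" "(v2, r2) \<in> G"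
      "v = v1 + t1 *\<^sub>R y" "r = r1 + t1 * c" "w = v2 + t2 *\<^sub>R y" "s = r2 + t2 * c"
      unfolding G'_def by blast
    have "(v1 + v2, r1 + r2) \<in> G" using add e by blast
    moreover have "v + w = (v1 + v2) + (t1 + t2) *\<^sub>R y" "r + s = (r1 + r2) + (t1 + t2) * c"
      using e by (auto simp: algebra_simps)
    ultimately show "(v + w, r + s) \<in> G'" unfolding G'_def by blast
  next
    fix a v r assume "(v, r) \<in> G'"
    then obtain v1 r1 t1 where e: "(v1, r1) \<in> G" "v = v1 + t1 *\<^sub>R y" "r = r1 + t1 * c"
      unfolding G'_def by auto
    have "(a *\<^sub>R v1, a * r1) \<in> G" using scale e by blast
    moreover have "a *\<^sub>R v = a *\<^sub>R v1 + (a * t1) *\<^sub>R y" "a * r = a * r1 + (a * t1) * c"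
      using e by (auto simp: algebra_simps)
    ultimately show "(a *\<^sub>R v, a * r) \<in> G'" unfolding G'_def by blast
  next
    fix v r assume "(v, r) \<in> G'"
    then show "r \<le> norm v"
      unfolding G'_def using norm_dominated_graph_gap_bound[OF G below above] by auto
  qed
  moreover have "G \<subseteq> G'"
  proof
    fix p assume "p \<in> G"
    then show "p \<in> G'" unfolding G'_def
      by (cases p) (intro CollectI exI[of _ "fst p"] exI[of _ "snd p"] exI[of _ 0], simp)
  qed
  moreover have "(y, c) \<in> G'" unfolding G'_def using scale[OF x, of 0]
    by (intro CollectI exI[of _ 0] exI[of _ 0] exI[of _ 1]) simp
  ultimately show ?thesis using y by blast
qed

text \<open>Hahn--Banach in the form needed here: every vector is normed by a functional of norm
  at most one.  A maximal norm-dominated graph (Zorn) is total, hence the graph of such a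
  functional.\<close>
lemma norming_functional:
  fixes x :: "'x::real_normed_vector"
  obtains h :: "'x \<Rightarrow>\<^sub>L real" where "norm h \<le> 1" and "blinfun_apply h x = norm x"
proof -
  have "\<exists>M\<in>{G. norm_dominated_graph x G}. \<forall>X\<in>{G. norm_dominated_graph x G}. M \<subseteq> X \<longrightarrow> X = M"
  proof (rule Zorn_Lemma2, intro ballI)
    fix C assume C: "C \<in> chains {G. norm_dominated_graph x G}"
    show "\<exists>U\<in>{G. norm_dominated_graph x G}. \<forall>X\<in>C. X \<subseteq> U"
    proof (cases "C = {}")
      case True then show ?thesis using norm_dominated_graph_line by blast
    next
      case False then show ?thesis using norm_dominated_graph_Union[OF C] by blast
    qed
  qed
  then obtain M where M: "norm_dominated_graph x M"
    and maximal: "\<And>X. norm_dominated_graph x X \<Longrightarrow> M \<subseteq> X \<Longrightarrow> X = M" by blast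
  have add: "\<And>v r w s. (v, r) \<in> M \<Longrightarrow> (w, s) \<in> M \<Longrightarrow> (v + w, r + s) \<in> M"
    and scale: "\<And>a v r. (v, r) \<in> M \<Longrightarrow> (a *\<^sub>R v, a * r) \<in> M"
    and dom: "\<And>v r. (v, r) \<in> M \<Longrightarrow> r \<le> norm v"
    and xM: "(x, norm x) \<in> M" using M by (auto simp: norm_dominated_graph_def)
  have total: "\<exists>r. (y, r) \<in> M" for y
    using norm_dominated_graph_extend[OF M, of y] maximal by blast
  have unique: "r = s" if "(v, r) \<in> M" "(v, s) \<in> M" for v r s
  proof -
    have "(0, r - s) \<in> M" using add[OF that(1) scale[OF that(2), of "-1"]] by simp
    from dom[OF this] dom[OF scale[OF this, of "-1"]] show ?thesis by simp
  qed
  define \<phi> where "\<phi> v = (SOME r. (v, r) \<in> M)" for v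
  have graph: "(v, \<phi> v) \<in> M" for v unfolding \<phi>_def using total by (metis someI_ex)
  then have phi_eq: "\<phi> v = r" if "(v, r) \<in> M" for v r using unique that by blast
  have bounded: "\<bar>\<phi> v\<bar> \<le> norm v" for v
    using dom[OF graph[of v]] dom[OF scale[OF graph[of v], of "-1"]] by simp
  have "bounded_linear \<phi>"
  proof (rule bounded_linear_intro)
    show "\<phi> (v + w) = \<phi> v + \<phi> w" for v w using phi_eq add graph by blast
    show "\<phi> (a *\<^sub>R v) = a *\<^sub>R \<phi> v" for a v using phi_eq scale graph by simp
    show "norm (\<phi> v) \<le> norm v * 1" for v using bounded[of v] by simp
  qed
  show ?thesis
  proof (rule that[of "Blinfun \<phi>"])
    show "norm (Blinfun \<phi>) \<le> 1"
      by (rule norm_blinfun_bound) (simp_all add: bounded_linear_Blinfun_apply[OF \<open>bounded_linear \<phi>\<close>] bounded)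
    show "blinfun_apply (Blinfun \<phi>) x = norm x"
      using bounded_linear_Blinfun_apply[OF \<open>bounded_linear \<phi>\<close>] phi_eq[OF xM] by simp
  qed
qed

lemma norm_le_by_functionals:
  fixes x :: "'x::real_normed_vector"
  assumes "\<And>h :: 'x \<Rightarrow>\<^sub>L real. norm h \<le> 1 \<Longrightarrow> blinfun_apply h x \<le> C"
  shows "norm x \<le> C"
  by (metis assms norming_functional)

lemma eq_by_functionals:
  fixes x y :: "'x::real_normed_vector"
  assumes "\<And>h :: 'x \<Rightarrow>\<^sub>L real. blinfun_apply h x = blinfun_apply h y"
  shows "x = y"
proof -
  have "norm (x - y) \<le> 0"
    by (rule norm_le_by_functionals) (simp add: assms blinfun.diff_right)
  then show ?thesis by simp
qed

lemma BK_space_facts: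
  assumes "BK_space L N"
  shows BK_zero: "(\<lambda>i. 0) \<in> L"
    and BK_add: "\<And>x y. x \<in> L \<Longrightarrow> y \<in> L \<Longrightarrow> (\<lambda>i. x i + y i) \<in> L"
    and BK_scale: "\<And>a x. x \<in> L \<Longrightarrow> (\<lambda>i. a * x i) \<in> L"
    and BK_nonneg: "\<And>x. x \<in> L \<Longrightarrow> 0 \<le> N x"
    and BK_norm_eq_0: "\<And>x. x \<in> L \<Longrightarrow> N x = 0 \<longleftrightarrow> x = (\<lambda>i. 0)"
    and BK_triangle: "\<And>x y. x \<in> L \<Longrightarrow> y \<in> L \<Longrightarrow> N (\<lambda>i. x i + y i) \<le> N x + N y"
    and BK_norm_scale: "\<And>a x. x \<in> L \<Longrightarrow> N (\<lambda>i. a * x i) = \<bar>a\<bar> * N x"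
  using assms unfolding BK_space_def by blast+

lemma Schauder_space_BK: "Schauder_space L N \<Longrightarrow> BK_space L N"
  by (simp add: Schauder_space_def)

definition tail :: "(nat \<Rightarrow> real) \<Rightarrow> nat \<Rightarrow> nat \<Rightarrow> real" where
  "tail c n = (\<lambda>i. c i - (\<Sum>j<n. c j * delta j i))"

definition block :: "(nat \<Rightarrow> real) \<Rightarrow> nat \<Rightarrow> nat \<Rightarrow> nat \<Rightarrow> real" where
  "block c m n = (\<lambda>i. if m \<le> i \<and> i < n then c i else 0)"

lemma partial_sum_delta: "(\<Sum>j<n. c j * delta j i) = (if i < n then c i else 0)"
  by (simp add: delta_def if_distrib[of "\<lambda>x. c _ * x"] sum.delta cong: if_cong)

lemma tail_in:
  assumes S: "Schauder_space L N" and c: "c \<in> L"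
  shows "tail c n \<in> L"
proof -
  have bk: "BK_space L N" using S by (rule Schauder_space_BK)
  have "(\<lambda>i. \<Sum>j<n. c j * delta j i) \<in> L"
  proof (induction n)
    case 0 then show ?case using BK_zero[OF bk] by simp
  next
    case (Suc n)
    have "delta n \<in> L" using S by (simp add: Schauder_space_def)
    from BK_add[OF bk Suc BK_scale[OF bk this]] show ?case by simp
  qed
  from BK_add[OF bk c BK_scale[OF bk this, of "-1"]] show ?thesis by (simp add: tail_def)
qed

text \<open>A block is the difference of two tails, so blocks lie in the space as well.\<close>
lemma block_eq_tails: "m \<le> n \<Longrightarrow> block c m n = (\<lambda>i. tail c m i + (-1) * tail c n i)"
  by (auto simp: block_def tail_def partial_sum_delta)

lemma block_in:
  assumes S: "Schauder_space L N" and c: "c \<in> L"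
  shows "block c m n \<in> L"
proof (cases "m \<le> n")
  case True
  have bk: "BK_space L N" using S by (rule Schauder_space_BK)
  show ?thesis unfolding block_eq_tails[OF True]
    by (rule BK_add[OF bk tail_in[OF S c] BK_scale[OF bk tail_in[OF S c]]])
next
  case False
  then have "block c m n = (\<lambda>i. 0)" by (auto simp: block_def)
  then show ?thesis using S by (simp add: Schauder_space_def BK_space_def)
qed

text \<open>In a Schauder sequence space the blocks of an element beyond some index are uniformly
  small; this is the Cauchy property of the expansion in the canonical basis.\<close>
lemma block_norm_small:
  assumes S: "Schauder_space L N" and c: "c \<in> L" and e: "e > 0"
  obtains M where "\<And>m n. m \<ge> M \<Longrightarrow> N (block c m n) < e"
proof -
  have bk: "BK_space L N" using S by (rule Schauder_space_BK)
  have "(\<lambda>n. N (tail c n)) \<longlonglongrightarrow> 0" using S c by (simp add: Schauder_space_def tail_def)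
  then obtain M where M: "\<And>n. n \<ge> M \<Longrightarrow> N (tail c n) < e / 2"
    using e unfolding LIMSEQ_def dist_real_def
    by (metis abs_less_iff diff_zero half_gt_zero)
  have "N (block c m n) < e" if "m \<ge> M" for m n
  proof (cases "m \<le> n")
    case True
    have "N (block c m n) \<le> N (tail c m) + N (\<lambda>i. (-1) * tail c n i)"
      unfolding block_eq_tails[OF True]
      by (rule BK_triangle[OF bk tail_in[OF S c] BK_scale[OF bk tail_in[OF S c]]])
    also have "\<dots> = N (tail c m) + N (tail c n)"
      using BK_norm_scale[OF bk tail_in[OF S c], of "-1"] by simp
    also have "\<dots> < e" using M[of m] M[of n] that True by simp
    finally show ?thesis .
  next
    case False
    then have "block c m n = (\<lambda>i. 0)" by (auto simp: block_def)
    then show ?thesis using BK_norm_eq_0[OF bk BK_zero[OF bk]] e by simp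
  qed
  then show ?thesis using that by blast
qed

lemma suminf_times_block: "(\<Sum>i. d i * block c m n i) = (\<Sum>i\<in>{m..<n}. d i * c i)"
proof -
  have "(\<Sum>i. d i * block c m n i) = (\<Sum>i\<in>{m..<n}. d i * block c m n i)"
    by (rule suminf_finite) (auto simp: block_def)
  also have "\<dots> = (\<Sum>i\<in>{m..<n}. d i * c i)" by (simp add: block_def)
  finally show ?thesis .
qed

lemma summable_if_blocks_dominated:
  fixes a :: "nat \<Rightarrow> 'a::banach"
  assumes S: "Schauder_space L N" and c: "c \<in> L" and K: "K > 0"
    and dominated: "\<And>m n. norm (\<Sum>i\<in>{m..<n}. a i) \<le> K * N (block c m n)"
  shows "summable a"
  unfolding summable_Cauchy
proof (intro allI impI)
  fix e :: real assume "e > 0"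
  then obtain M where M: "\<And>m n. m \<ge> M \<Longrightarrow> N (block c m n) < e / K"
    using block_norm_small[OF S c, of "e / K"] K by auto
  have "norm (\<Sum>i\<in>{m..<n}. a i) < e" if "m \<ge> M" for m n
    using dominated[of m n] M[OF that, of n] K by (simp add: field_simps)
  then show "\<exists>M. \<forall>m\<ge>M. \<forall>n. norm (sum a {m..<n}) < e" by blast
qed

lemma dual_pairing_bound:
  assumes bk: "BK_space L N" and d: "d \<in> dual_set L N" and z: "z \<in> L"
  shows "\<bar>\<Sum>i. d i * z i\<bar> \<le> dual_norm L N d * N z"
proof -
  have summable: "\<And>x. x \<in> L \<Longrightarrow> summable (\<lambda>i. d i * x i)"
    and "\<exists>B. \<forall>x\<in>L. \<bar>\<Sum>i. d i * x i\<bar> \<le> B * N x"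
    using d unfolding dual_set_def by auto
  then obtain B where B: "\<And>x. x \<in> L \<Longrightarrow> \<bar>\<Sum>i. d i * x i\<bar> \<le> B * N x" by blast
  have bdd: "bdd_above ((\<lambda>x. \<bar>\<Sum>i. d i * x i\<bar>) ` {x\<in>L. N x \<le> 1})"
  proof (rule bdd_aboveI2)
    fix x assume x: "x \<in> {x\<in>L. N x \<le> 1}"
    have "\<bar>\<Sum>i. d i * x i\<bar> \<le> B * N x" using B x by blast
    also have "\<dots> \<le> \<bar>B\<bar> * N x" using BK_nonneg[OF bk] x by (intro mult_right_mono) auto
    also have "\<dots> \<le> \<bar>B\<bar>" using x by (intro mult_left_le) auto
    finally show "\<bar>\<Sum>i. d i * x i\<bar> \<le> \<bar>B\<bar>" .
  qed
  show ?thesis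
  proof (cases "N z = 0")
    case True
    then show ?thesis using BK_norm_eq_0[OF bk z] by simp
  next
    case False
    then have Nz: "N z > 0" using BK_nonneg[OF bk z] by simp
    define w where "w = (\<lambda>i. inverse (N z) * z i)"
    have "w \<in> L" unfolding w_def by (rule BK_scale[OF bk z])
    moreover have "N w = 1" unfolding w_def using BK_norm_scale[OF bk z] Nz by simp
    ultimately have "\<bar>\<Sum>i. d i * w i\<bar> \<le> dual_norm L N d"
      unfolding dual_norm_def by (intro cSUP_upper[OF _ bdd]) simp
    moreover have "(\<Sum>i. d i * w i) = inverse (N z) * (\<Sum>i. d i * z i)"
      unfolding w_def using suminf_mult[OF summable[OF z], of "inverse (N z)"]
      by (simp add: algebra_simps)
    ultimately show ?thesis using Nz by (simp add: abs_mult field_simps)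
  qed
qed

lemma ell_BesselE:
  assumes "ell_Bessel L N g"
  obtains B where "B > 0" "\<And>x. (\<lambda>i. blinfun_apply (g i) x) \<in> L"
    "\<And>x. N (\<lambda>i. blinfun_apply (g i) x) \<le> B * norm x"
  using assms unfolding ell_Bessel_def by blast

lemma dual_ell_BesselE:
  assumes "dual_ell_Bessel L N f"
  obtains B where "B > 0" "\<And>h. (\<lambda>i. blinfun_apply h (f i)) \<in> dual_set L N"
    "\<And>h. dual_norm L N (\<lambda>i. blinfun_apply h (f i)) \<le> B * norm h"
  using assms unfolding dual_ell_Bessel_def by blast

text \<open>Convergence of the synthesis series of (G,F) in X: by Hahn--Banach the norm of a block
  is the supremum of its pairings with unit functionals h, and each such pairing is a block of
  the l-sequence (g_i(x)) paired with the l*-sequence (h(f_i)).\<close>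
lemma synthesis_summable:
  fixes f :: "nat \<Rightarrow> 'x::banach"
  assumes S: "Schauder_space L N" and gB: "ell_Bessel L N g" and fB: "dual_ell_Bessel L N f"
  shows "summable (\<lambda>i. blinfun_apply (g i) x *\<^sub>R f i)"
proof -
  have bk: "BK_space L N" using S by (rule Schauder_space_BK)
  obtain B where B: "B > 0" "\<And>h. (\<lambda>i. blinfun_apply h (f i)) \<in> dual_set L N"
    "\<And>h. dual_norm L N (\<lambda>i. blinfun_apply h (f i)) \<le> B * norm h"
    using dual_ell_BesselE[OF fB] by blast
  define c where "c = (\<lambda>i. blinfun_apply (g i) x)"
  have c: "c \<in> L" using gB unfolding c_def ell_Bessel_def by blast
  show ?thesis
  proof (rule summable_if_blocks_dominated[OF S c B(1)])
    fix m n
    show "norm (\<Sum>i\<in>{m..<n}. blinfun_apply (g i) x *\<^sub>R f i) \<le> B * N (block c m n)"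
    proof (rule norm_le_by_functionals)
      fix h :: "'x \<Rightarrow>\<^sub>L real" assume h: "norm h \<le> 1"
      have "blinfun_apply h (\<Sum>i\<in>{m..<n}. blinfun_apply (g i) x *\<^sub>R f i)
          = (\<Sum>i. blinfun_apply h (f i) * block c m n i)"
        by (simp add: suminf_times_block blinfun.sum_right blinfun.scaleR_right c_def mult.commute)
      also have "\<dots> \<le> dual_norm L N (\<lambda>i. blinfun_apply h (f i)) * N (block c m n)"
        by (rule order_trans[OF abs_ge_self dual_pairing_bound[OF bk B(2) block_in[OF S c]]])
      also have "\<dots> \<le> (B * norm h) * N (block c m n)"
        by (rule mult_right_mono[OF B(3) BK_nonneg[OF bk block_in[OF S c]]])
      also have "\<dots> \<le> B * N (block c m n)"
        using h B(1) BK_nonneg[OF bk block_in[OF S c, of m n]]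
        by (simp add: mult.assoc mult_left_le_one_le)
      finally show "blinfun_apply h (\<Sum>i\<in>{m..<n}. blinfun_apply (g i) x *\<^sub>R f i)
          \<le> B * N (block c m n)" .
    qed
  qed
qed

text \<open>Convergence of the synthesis series of (F,G) in X*: a block, evaluated at x, is the
  pairing of a block of the l*-sequence (h(f_i)) with the l-sequence (g_i(x)).  Here the
  Schauder property of l* is what is needed.\<close>
lemma dual_synthesis_summable:
  fixes f :: "nat \<Rightarrow> 'x::real_normed_vector"
  assumes bk: "BK_space L N" and SD: "Schauder_space (dual_set L N) (dual_norm L N)"
    and gB: "ell_Bessel L N g" and fB: "dual_ell_Bessel L N f"
  shows "summable (\<lambda>i. blinfun_apply h (f i) *\<^sub>R g i)"
proof -
  have bkD: "BK_space (dual_set L N) (dual_norm L N)" using SD by (rule Schauder_space_BK)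
  obtain B where B: "B > 0" "\<And>x. (\<lambda>i. blinfun_apply (g i) x) \<in> L"
    "\<And>x. N (\<lambda>i. blinfun_apply (g i) x) \<le> B * norm x"
    using ell_BesselE[OF gB] by blast
  define d where "d = (\<lambda>i. blinfun_apply h (f i))"
  have d: "d \<in> dual_set L N" using fB unfolding d_def dual_ell_Bessel_def by blast
  show ?thesis
  proof (rule summable_if_blocks_dominated[OF SD d B(1)])
    fix m n
    have block: "block d m n \<in> dual_set L N" by (rule block_in[OF SD d])
    have "norm (\<Sum>i\<in>{m..<n}. blinfun_apply h (f i) *\<^sub>R g i) \<le> dual_norm L N (block d m n) * B"
    proof (rule norm_blinfun_bound)
      show "0 \<le> dual_norm L N (block d m n) * B" using BK_nonneg[OF bkD block] B(1) by simp
    next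
      fix x
      have "blinfun_apply (\<Sum>i\<in>{m..<n}. blinfun_apply h (f i) *\<^sub>R g i) x
          = (\<Sum>i. block d m n i * blinfun_apply (g i) x)"
        using suminf_times_block[of "\<lambda>i. blinfun_apply (g i) x" d m n]
        by (simp add: blinfun.sum_left blinfun.scaleR_left d_def mult.commute)
      then have "norm (blinfun_apply (\<Sum>i\<in>{m..<n}. blinfun_apply h (f i) *\<^sub>R g i) x)
          \<le> dual_norm L N (block d m n) * N (\<lambda>i. blinfun_apply (g i) x)"
        using dual_pairing_bound[OF bk block B(2)] by simp
      also have "\<dots> \<le> dual_norm L N (block d m n) * (B * norm x)"
        by (rule mult_left_mono[OF B(3) BK_nonneg[OF bkD block]])
      finally show "norm (blinfun_apply (\<Sum>i\<in>{m..<n}. blinfun_apply h (f i) *\<^sub>R g i) x)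
          \<le> dual_norm L N (block d m n) * B * norm x" by (simp add: mult.assoc)
    qed
    then show "norm (\<Sum>i\<in>{m..<n}. blinfun_apply h (f i) *\<^sub>R g i) \<le> B * dual_norm L N (block d m n)"
      by (simp add: mult.commute)
  qed
qed

text \<open>The two Bessel conditions alone make both synthesis series converge, so they decide
  both kinds of pair Bessel property simultaneously.\<close>
lemma pair_Bessel_iff_dual_pair_Bessel:
  fixes f :: "nat \<Rightarrow> 'x::banach"
  assumes S: "Schauder_space L N" and SD: "Schauder_space (dual_set L N) (dual_norm L N)"
  shows "pair_Bessel L N g f \<longleftrightarrow> dual_pair_Bessel L N f g"
  unfolding pair_Bessel_def dual_pair_Bessel_def
  using synthesis_summable[OF S] dual_synthesis_summable[OF Schauder_space_BK[OF S] SD] by blast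

text \<open>The frame operator of (F,G) on X* is the Banach-space adjoint of that of (G,F):
  apply the functional h, resp. evaluation at x, termwise to the convergent series.\<close>
lemma S_GF_adjoint:
  fixes f :: "nat \<Rightarrow> 'x::real_normed_vector"
  assumes "pair_Bessel L N g f" and bk: "BK_space L N"
    and SD: "Schauder_space (dual_set L N) (dual_norm L N)"
  shows "blinfun_apply (S_GF f g h) x = blinfun_apply h (S_FG f g x)"
proof -
  have gB: "ell_Bessel L N g" and fB: "dual_ell_Bessel L N f"
    and X: "summable (\<lambda>i. blinfun_apply (g i) x *\<^sub>R f i)"
    using assms(1) unfolding pair_Bessel_def by auto
  have "blinfun_apply (S_GF f g h) x = (\<Sum>i. blinfun_apply (blinfun_apply h (f i) *\<^sub>R g i) x)"
    unfolding S_GF_def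
    by (rule bounded_linear.suminf[OF blinfun.bounded_linear_left dual_synthesis_summable[OF bk SD gB fB]])
  also have "\<dots> = (\<Sum>i. blinfun_apply h (blinfun_apply (g i) x *\<^sub>R f i))"
    by (simp add: blinfun.scaleR_right blinfun.scaleR_left mult.commute)
  also have "\<dots> = blinfun_apply h (S_FG f g x)"
    unfolding S_FG_def by (rule bounded_linear.suminf[OF blinfun.bounded_linear_right X, symmetric])
  finally show ?thesis .
qed

text \<open>For a pair Bessel (G,F) the frame operator is bounded: testing with a unit functional h
  gives the pairing of (h(f_i)) in l* with (g_i(x)) in l.\<close>
lemma S_FG_bounded_linear:
  fixes f :: "nat \<Rightarrow> 'x::real_normed_vector"
  assumes PB: "pair_Bessel L N g f" and bk: "BK_space L N"
  shows "bounded_linear (S_FG f g)"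
proof -
  have X: "\<And>x. summable (\<lambda>i. blinfun_apply (g i) x *\<^sub>R f i)"
    and gB: "ell_Bessel L N g" and fB: "dual_ell_Bessel L N f"
    using PB unfolding pair_Bessel_def by auto
  obtain B1 where B1: "B1 > 0" "\<And>x. (\<lambda>i. blinfun_apply (g i) x) \<in> L"
    "\<And>x. N (\<lambda>i. blinfun_apply (g i) x) \<le> B1 * norm x"
    using ell_BesselE[OF gB] by blast
  obtain B2 where B2: "B2 > 0" "\<And>h. (\<lambda>i. blinfun_apply h (f i)) \<in> dual_set L N"
    "\<And>h. dual_norm L N (\<lambda>i. blinfun_apply h (f i)) \<le> B2 * norm h"
    using dual_ell_BesselE[OF fB] by blast
  show ?thesis
  proof (rule bounded_linear_intro)
    show "S_FG f g (x + y) = S_FG f g x + S_FG f g y" for x y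
      unfolding S_FG_def using suminf_add[OF X[of x] X[of y]]
      by (simp add: blinfun.add_right scaleR_add_left)
    show "S_FG f g (r *\<^sub>R x) = r *\<^sub>R S_FG f g x" for r x
      unfolding S_FG_def using suminf_scaleR_right[OF X[of x], of r]
      by (simp add: blinfun.scaleR_right)
    show "norm (S_FG f g x) \<le> norm x * (B2 * B1)" for x
    proof (rule norm_le_by_functionals)
      fix h :: "'x \<Rightarrow>\<^sub>L real" assume h: "norm h \<le> 1"
      have "blinfun_apply h (S_FG f g x) = (\<Sum>i. blinfun_apply h (blinfun_apply (g i) x *\<^sub>R f i))"
        unfolding S_FG_def by (rule bounded_linear.suminf[OF blinfun.bounded_linear_right X])
      also have "\<dots> = (\<Sum>i. blinfun_apply h (f i) * blinfun_apply (g i) x)"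
        by (simp add: blinfun.scaleR_right mult.commute)
      also have "\<dots> \<le> dual_norm L N (\<lambda>i. blinfun_apply h (f i)) * N (\<lambda>i. blinfun_apply (g i) x)"
        by (rule order_trans[OF abs_ge_self dual_pairing_bound[OF bk B2(2) B1(2)]])
      also have "\<dots> \<le> (B2 * norm h) * (B1 * norm x)"
        using B1 B2 BK_nonneg[OF bk B1(2)] by (intro mult_mono) auto
      also have "\<dots> \<le> B2 * (B1 * norm x)"
        using h B1(1) B2(1) by (simp add: mult.assoc mult_left_le_one_le)
      finally show "blinfun_apply h (S_FG f g x) \<le> norm x * (B2 * B1)" by (simp add: algebra_simps)
    qed
  qed
qed

text \<open>An operator A on X* is the adjoint of S when (A h)(x) = h(S x); it is then composition
  with S, hence bounded linear.\<close>
lemma bounded_linear_adjoint: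
  assumes S: "bounded_linear S"
    and adjoint: "\<And>h x. blinfun_apply (A h) x = blinfun_apply h (S x)"
  shows "bounded_linear A"
proof -
  have "A = (\<lambda>h. h o\<^sub>L Blinfun S)"
    by (intro ext blinfun_eqI) (simp add: adjoint bounded_linear_Blinfun_apply[OF S])
  then show ?thesis
    using bounded_bilinear.bounded_linear_left[OF bounded_bilinear_blinfun_compose] by simp
qed

text \<open>The adjoint of an invertible operator is invertible, with the adjoint of the inverse as
  its inverse.\<close>
lemma invertible_adjoint:
  fixes S :: "'x::real_normed_vector \<Rightarrow> 'x" and A :: "('x \<Rightarrow>\<^sub>L real) \<Rightarrow> ('x \<Rightarrow>\<^sub>L real)"
  assumes inv: "invertible_op S"
    and adjoint: "\<And>h x. blinfun_apply (A h) x = blinfun_apply h (S x)"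
  shows "invertible_op A"
proof -
  obtain T where S: "bounded_linear S" and T: "bounded_linear T"
    and TS: "\<And>x. T (S x) = x" and ST: "\<And>y. S (T y) = y"
    using inv unfolding invertible_op_def by blast
  define A' where "A' = (\<lambda>h::'x \<Rightarrow>\<^sub>L real. h o\<^sub>L Blinfun T)"
  have A': "blinfun_apply (A' h) y = blinfun_apply h (T y)" for h y
    by (simp add: A'_def bounded_linear_Blinfun_apply[OF T])
  show ?thesis unfolding invertible_op_def
  proof (intro conjI exI[of _ A'] allI)
    show "bounded_linear A" by (rule bounded_linear_adjoint[OF S adjoint])
    show "bounded_linear A'" by (rule bounded_linear_adjoint[OF T A'])
    show "A' (A h) = h" for h by (rule blinfun_eqI) (simp add: A' adjoint ST)
    show "A (A' h) = h" for h by (rule blinfun_eqI) (simp add: A' adjoint TS)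
  qed
qed

lemma reflexive_representation:
  fixes \<Phi> :: "('x::real_normed_vector \<Rightarrow>\<^sub>L real) \<Rightarrow> real"
  assumes "reflexive_space TYPE('x)" and "bounded_linear \<Phi>"
  obtains x :: 'x where "\<And>k. \<Phi> k = blinfun_apply k x"
proof -
  obtain x :: 'x where "\<And>k. blinfun_apply (Blinfun \<Phi>) k = blinfun_apply k x"
    using assms(1) unfolding reflexive_space_def by blast
  then show ?thesis using that by (simp add: bounded_linear_Blinfun_apply[OF assms(2)])
qed

text \<open>Conversely, on a reflexive space, if the adjoint A is invertible with inverse R then so
  is S: its inverse sends y to the point representing the functional k \<mapsto> (R k)(y).\<close>
lemma invertible_of_invertible_adjoint:
  fixes S :: "'x::real_normed_vector \<Rightarrow> 'x" and A :: "('x \<Rightarrow>\<^sub>L real) \<Rightarrow> ('x \<Rightarrow>\<^sub>L real)"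
  assumes reflexive: "reflexive_space TYPE('x)" and S: "bounded_linear S"
    and adjoint: "\<And>h x. blinfun_apply (A h) x = blinfun_apply h (S x)"
    and inv: "invertible_op A"
  shows "invertible_op S"
proof -
  obtain R where R: "bounded_linear R" and RA: "\<And>h. R (A h) = h" and AR: "\<And>k. A (R k) = k"
    using inv unfolding invertible_op_def by blast
  have "\<exists>x. \<forall>k. blinfun_apply (R k) y = blinfun_apply k x" for y
    using reflexive_representation[OF reflexive,
        of "\<lambda>k. blinfun_apply (R k) y"] bounded_linear_compose[OF blinfun.bounded_linear_left R]
    by metis
  then obtain T where T: "\<And>k y. blinfun_apply (R k) y = blinfun_apply k (T y)" by metis
  have ST: "S (T y) = y" for y
    by (rule eq_by_functionals) (metis T RA adjoint)
  have TS: "T (S x) = x" for x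
    by (rule eq_by_functionals) (metis T AR adjoint)
  obtain K where K: "K > 0" "\<And>k. norm (R k) \<le> norm k * K"
    using bounded_linear.pos_bounded[OF R] by blast
  have "bounded_linear T"
  proof (rule bounded_linear_intro)
    show "T (y + z) = T y + T z" for y z
      by (rule eq_by_functionals) (simp add: T[symmetric] blinfun.add_right)
    show "T (r *\<^sub>R y) = r *\<^sub>R T y" for r y
      by (rule eq_by_functionals) (simp add: T[symmetric] blinfun.scaleR_right)
    show "norm (T y) \<le> norm y * K" for y
    proof (rule norm_le_by_functionals)
      fix k :: "'x \<Rightarrow>\<^sub>L real" assume k: "norm k \<le> 1"
      have "blinfun_apply k (T y) = blinfun_apply (R k) y" by (simp add: T)
      also have "\<dots> \<le> norm (R k) * norm y" using norm_blinfun[of "R k" y] by simp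
      also have "\<dots> \<le> (norm k * K) * norm y" by (rule mult_right_mono[OF K(2)]) simp
      also have "\<dots> \<le> K * norm y" using k K(1) by (simp add: mult_left_le_one_le mult.assoc)
      finally show "blinfun_apply k (T y) \<le> norm y * K" by (simp add: mult.commute)
    qed
  qed
  then show ?thesis unfolding invertible_op_def using S ST TS by blast
qed

lemma invertible_iff_adjoint_invertible:
  fixes S :: "'x::real_normed_vector \<Rightarrow> 'x" and A :: "('x \<Rightarrow>\<^sub>L real) \<Rightarrow> ('x \<Rightarrow>\<^sub>L real)"
  assumes "reflexive_space TYPE('x)" and "bounded_linear S"
    and "\<And>h x. blinfun_apply (A h) x = blinfun_apply h (S x)"
  shows "invertible_op S \<longleftrightarrow> invertible_op A"
  using invertible_adjoint[of S A] invertible_of_invertible_adjoint[OF assms] assms(3) by blast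

theorem mainTheorem6:
  fixes L :: "(nat \<Rightarrow> real) set" and N :: "(nat \<Rightarrow> real) \<Rightarrow> real"
    and f :: "nat \<Rightarrow> 'x::banach" and g :: "nat \<Rightarrow> ('x \<Rightarrow>\<^sub>L real)"
  assumes "reflexive_space TYPE('x)"
    and "Schauder_space L N"
    and "Schauder_space (dual_set L N) (dual_norm L N)"
  shows "(pair_Bessel L N g f \<longleftrightarrow> dual_pair_Bessel L N f g)
    \<and> (pair_Bessel L N g f \<longrightarrow> (\<forall>h x. blinfun_apply h (S_FG f g x) = blinfun_apply (S_GF f g h) x))
    \<and> (pair_frame L N g f \<longleftrightarrow> dual_pair_frame L N f g)"
proof -
  have bk: "BK_space L N" using assms(2) by (rule Schauder_space_BK)
  have Bessel: "pair_Bessel L N g f \<longleftrightarrow> dual_pair_Bessel L N f g"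
    by (rule pair_Bessel_iff_dual_pair_Bessel[OF assms(2,3)])
  have adjoint: "blinfun_apply (S_GF f g h) x = blinfun_apply h (S_FG f g x)"
    if "pair_Bessel L N g f" for h x
    by (rule S_GF_adjoint[OF that bk assms(3)])
  have "invertible_op (S_FG f g) \<longleftrightarrow> invertible_op (S_GF f g)" if "pair_Bessel L N g f"
    by (rule invertible_iff_adjoint_invertible[OF assms(1) S_FG_bounded_linear[OF that bk]
          adjoint[OF that]])
  then have frame: "pair_frame L N g f \<longleftrightarrow> dual_pair_frame L N f g"
    unfolding pair_frame_def dual_pair_frame_def using Bessel by blast
  show ?thesis using Bessel adjoint frame by simp
qed

end
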